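(* Let $E_1,\dots,E_m\in\mathcal L_\Box$ and let $a_1,\dots,a_m$ be pairwise distinct atoms such that every occurrence of each $a_i$ in each $E_j$ lies within the scope of some $\Box$. Then there is a map $\tau$ from atoms to formulas, extended to all formulas by fixing $\bot$ and commuting with $\wedge,\vee,\to,\Box$, such that: (1) $\mathsf{iGL}\vdash\tau(E_i)\leftrightarrow\tau(a_i)$ for every $1\le i\le m$; (2) $\tau(a)=a$ for every atom $a\notin\{a_1,\dots,a_m\}$; (3) for each $i$, every atom occurring in $\tau(a_i)$ occurs in some $E_j$ and is distinct from all of $a_1,\dots,a_m$.
   Context: The modal language $\mathcal L_\Box$ is built from countably many propositional variables, countably many propositional parameters (variables and parameters together are called atoms), the constant $\bot$, the binary connectives $\wedge,\vee,\to$ and the unary modality $\Box$. $\mathsf{iGL}$ is the least set of $\mathcal L_\Box$-formulas closed under modus ponens that contains every instance of the axiom schemata of intuitionistic propositional logic $\mathsf{IPC}$, of $\Box(A\to B)\to(\Box A\to\Box B)$, of $\Box A\to\Box\Box A$, of the Löb schema $\Box(\Box A\to A)\to\Box A$, and of $p\to\Box p$ for every parameter $p$, together with $\Box\varphi$ for every such instance $\varphi$. *)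

theory Defs
  imports Main
begin

datatype atom = PVar nat | PPar nat

datatype fm = At atom | Bot | And fm fm | Or fm fm | Imp fm fm | Box fm

definition Iff :: "fm \<Rightarrow> fm \<Rightarrow> fm" where
  "Iff A B = And (Imp A B) (Imp B A)"

inductive ipc_ax :: "fm \<Rightarrow> bool" where
  K1: "ipc_ax (Imp A (Imp B A))"
| S: "ipc_ax (Imp (Imp A (Imp B C)) (Imp (Imp A B) (Imp A C)))"
| AndE1: "ipc_ax (Imp (And A B) A)"
| AndE2: "ipc_ax (Imp (And A B) B)"
| AndI: "ipc_ax (Imp A (Imp B (And A B)))"
| OrI1: "ipc_ax (Imp A (Or A B))"
| OrI2: "ipc_ax (Imp B (Or A B))"
| OrE: "ipc_ax (Imp (Imp A C) (Imp (Imp B C) (Imp (Or A B) C)))"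
| EFQ: "ipc_ax (Imp Bot A)"

inductive igl_ax :: "fm \<Rightarrow> bool" where
  ipc: "ipc_ax A \<Longrightarrow> igl_ax A"
| distK: "igl_ax (Imp (Box (Imp A B)) (Imp (Box A) (Box B)))"
| four: "igl_ax (Imp (Box A) (Box (Box A)))"
| loeb: "igl_ax (Imp (Box (Imp (Box A) A)) (Box A))"
| par: "igl_ax (Imp (At (PPar n)) (Box (At (PPar n))))"

inductive iGL :: "fm \<Rightarrow> bool" where
  ax: "igl_ax A \<Longrightarrow> iGL A"
| boxax: "igl_ax A \<Longrightarrow> iGL (Box A)"
| mp: "iGL A \<Longrightarrow> iGL (Imp A B) \<Longrightarrow> iGL B"

fun subst :: "(atom \<Rightarrow> fm) \<Rightarrow> fm \<Rightarrow> fm" where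
  "subst \<tau> (At a) = \<tau> a"
| "subst \<tau> Bot = Bot"
| "subst \<tau> (And A B) = And (subst \<tau> A) (subst \<tau> B)"
| "subst \<tau> (Or A B) = Or (subst \<tau> A) (subst \<tau> B)"
| "subst \<tau> (Imp A B) = Imp (subst \<tau> A) (subst \<tau> B)"
| "subst \<tau> (Box A) = Box (subst \<tau> A)"

fun atoms :: "fm \<Rightarrow> atom set" where
  "atoms (At a) = {a}"
| "atoms Bot = {}"
| "atoms (And A B) = atoms A \<union> atoms B"
| "atoms (Or A B) = atoms A \<union> atoms B"
| "atoms (Imp A B) = atoms A \<union> atoms B"
| "atoms (Box A) = atoms A"

fun guarded :: "atom \<Rightarrow> fm \<Rightarrow> bool" where
  "guarded a (At b) = (b \<noteq> a)"
| "guarded a Bot = True"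
| "guarded a (And A B) = (guarded a A \<and> guarded a B)"
| "guarded a (Or A B) = (guarded a A \<and> guarded a B)"
| "guarded a (Imp A B) = (guarded a A \<and> guarded a B)"
| "guarded a (Box A) = True"

end

theory Submission
  imports Defs "HOL-Library.Countable"
begin

text \<open>If every \<open>a\<^sub>i\<close> is guarded in every \<open>E\<^sub>j\<close>, then \<open>E\<^sub>j\<close> is a propositional combination of
  atoms other than the \<open>a\<^sub>i\<close> and of outermost boxed subformulas \<open>\<box>C\<close>. Replacing each such \<open>\<box>C\<close>
  by a fresh atom \<open>q\<^sub>C\<close> turns \<open>E\<^sub>j\<close> into a formula \<open>B\<^sub>j\<close> free of the \<open>a\<^sub>i\<close>, so it suffices to solve
  the boxed system \<open>q\<^sub>C \<leftrightarrow> \<box>C[a\<^sub>i := B\<^sub>i]\<close> and to let \<open>\<tau>(a\<^sub>i)\<close> be \<open>B\<^sub>i\<close> with the solution substituted.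
  A single boxed equation \<open>p \<leftrightarrow> \<box>D(p)\<close> is solved by \<open>\<box>D(\<top>)\<close> (de Jongh--Sambin), and a
  finite boxed system is solved one equation at a time by Bekic's substitution argument.\<close>

abbreviation Verum :: fm where "Verum \<equiv> Imp Bot Bot"

lemma iGL_nec: "iGL A \<Longrightarrow> iGL (Box A)"
proof (induction rule: iGL.induct)
  case (ax A)
  then show ?case by (rule iGL.boxax)
next
  case (boxax A)
  then show ?case by (meson iGL.mp iGL.ax iGL.boxax igl_ax.four)
next
  case (mp A B)
  then show ?case by (meson iGL.mp iGL.ax igl_ax.distK)
qed

lemma iGL_imp_refl: "iGL (Imp A A)"
  by (meson iGL.mp iGL.ax igl_ax.ipc ipc_ax.S ipc_ax.K1)

lemma iGL_loeb_rule: "iGL (Imp (Box A) A) \<Longrightarrow> iGL A"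
  by (meson iGL.mp iGL_nec iGL.ax igl_ax.loeb)

text \<open>Hypotheses enter only through modus ponens; necessitation is confined to theorems of
  \<open>iGL\<close>, which is what makes the deduction theorem hold.\<close>

inductive derives :: "fm set \<Rightarrow> fm \<Rightarrow> bool" (infix "\<turnstile>" 55) where
  assm: "A \<in> G \<Longrightarrow> G \<turnstile> A"
| from_iGL: "iGL A \<Longrightarrow> G \<turnstile> A"
| mp: "G \<turnstile> Imp A B \<Longrightarrow> G \<turnstile> A \<Longrightarrow> G \<turnstile> B"

lemma derives_empty_iff: "{} \<turnstile> A \<longleftrightarrow> iGL A"
proof
  show "{} \<turnstile> A \<Longrightarrow> iGL A"
    by (induction "{} :: fm set" A rule: derives.induct) (auto intro: iGL.mp)
qed (rule derives.from_iGL)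

lemma derives_mono: "G \<turnstile> A \<Longrightarrow> G \<subseteq> H \<Longrightarrow> H \<turnstile> A"
  by (induction rule: derives.induct) (auto intro: derives.intros)

lemma derives_weaken: "G \<turnstile> A \<Longrightarrow> insert B G \<turnstile> A"
  by (erule derives_mono) blast

lemma derives_insert: "insert A G \<turnstile> A"
  by (rule derives.assm) simp

lemma derives_ax: "igl_ax A \<Longrightarrow> G \<turnstile> A"
  by (intro derives.from_iGL iGL.ax)

lemma derives_ipc: "ipc_ax A \<Longrightarrow> G \<turnstile> A"
  by (intro derives_ax igl_ax.ipc)

lemma derives_impI: "insert A G \<turnstile> B \<Longrightarrow> G \<turnstile> Imp A B"
proof (induction "insert A G" B rule: derives.induct)
  case (assm B)
  then show ?case
    by (metis derives.assm derives.from_iGL derives.mp derives_ipc iGL_imp_refl insertE ipc_ax.K1)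
next
  case (from_iGL B)
  then show ?case by (meson derives.from_iGL derives.mp derives_ipc ipc_ax.K1)
next
  case (mp B C)
  then show ?case by (meson derives.mp derives_ipc ipc_ax.S)
qed

lemma derives_impI_iGL: "{A} \<turnstile> B \<Longrightarrow> iGL (Imp A B)"
  using derives_impI derives_empty_iff by blast

lemma derives_conjI: "G \<turnstile> A \<Longrightarrow> G \<turnstile> B \<Longrightarrow> G \<turnstile> And A B"
  by (meson derives.mp derives_ipc ipc_ax.AndI)

lemma derives_conjD1: "G \<turnstile> And A B \<Longrightarrow> G \<turnstile> A"
  by (meson derives.mp derives_ipc ipc_ax.AndE1)

lemma derives_conjD2: "G \<turnstile> And A B \<Longrightarrow> G \<turnstile> B"
  by (meson derives.mp derives_ipc ipc_ax.AndE2)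

lemma derives_disjI1: "G \<turnstile> A \<Longrightarrow> G \<turnstile> Or A B"
  by (meson derives.mp derives_ipc ipc_ax.OrI1)

lemma derives_disjI2: "G \<turnstile> B \<Longrightarrow> G \<turnstile> Or A B"
  by (meson derives.mp derives_ipc ipc_ax.OrI2)

lemma derives_disjE:
  "G \<turnstile> Or A B \<Longrightarrow> insert A G \<turnstile> C \<Longrightarrow> insert B G \<turnstile> C \<Longrightarrow> G \<turnstile> C"
  by (meson derives.mp derives_impI derives_ipc ipc_ax.OrE)

lemma derives_iffI: "insert A G \<turnstile> B \<Longrightarrow> insert B G \<turnstile> A \<Longrightarrow> G \<turnstile> Iff A B"
  unfolding Iff_def by (intro derives_conjI derives_impI)

lemma derives_iffD1: "G \<turnstile> Iff A B \<Longrightarrow> G \<turnstile> A \<Longrightarrow> G \<turnstile> B"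
  unfolding Iff_def by (meson derives.mp derives_conjD1)

lemma derives_iffD2: "G \<turnstile> Iff A B \<Longrightarrow> G \<turnstile> B \<Longrightarrow> G \<turnstile> A"
  unfolding Iff_def by (meson derives.mp derives_conjD2)

lemma derives_iff_refl: "G \<turnstile> Iff A A"
  by (intro derives_iffI derives_insert)

lemma derives_And_cong:
  "G \<turnstile> Iff A A' \<Longrightarrow> G \<turnstile> Iff B B' \<Longrightarrow> G \<turnstile> Iff (And A B) (And A' B')"
  by (intro derives_iffI derives_conjI)
    (meson derives_iffD1 derives_iffD2 derives_conjD1 derives_conjD2 derives_insert derives_weaken)+

lemma derives_Or_cong:
  "G \<turnstile> Iff A A' \<Longrightarrow> G \<turnstile> Iff B B' \<Longrightarrow> G \<turnstile> Iff (Or A B) (Or A' B')"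
  by (intro derives_iffI; rule derives_disjE[OF derives_insert])
    (meson derives_iffD1 derives_iffD2 derives_disjI1 derives_disjI2 derives_insert derives_weaken)+

lemma derives_Imp_cong:
  "G \<turnstile> Iff A A' \<Longrightarrow> G \<turnstile> Iff B B' \<Longrightarrow> G \<turnstile> Iff (Imp A B) (Imp A' B')"
  by (intro derives_iffI derives_impI)
    (meson derives.mp derives_iffD1 derives_iffD2 derives_insert derives_weaken)+

lemma derives_K: "G \<turnstile> Box (Imp A B) \<Longrightarrow> G \<turnstile> Box A \<Longrightarrow> G \<turnstile> Box B"
  by (meson derives.mp derives_ax igl_ax.distK)

lemma derives_four: "G \<turnstile> Box A \<Longrightarrow> G \<turnstile> Box (Box A)"
  by (meson derives.mp derives_ax igl_ax.four)

lemma derives_Box_mono: "iGL (Imp A B) \<Longrightarrow> G \<turnstile> Box A \<Longrightarrow> G \<turnstile> Box B"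
  by (meson derives_K derives.from_iGL iGL_nec)

lemma derives_Box_iff: "G \<turnstile> Box (Iff A B) \<Longrightarrow> G \<turnstile> Iff (Box A) (Box B)"
proof -
  assume "G \<turnstile> Box (Iff A B)"
  then have "G \<turnstile> Box (Imp A B)" and "G \<turnstile> Box (Imp B A)"
    unfolding Iff_def by (meson derives_Box_mono iGL.ax igl_ax.ipc ipc_ax.AndE1 ipc_ax.AndE2)+
  then show ?thesis
    by (intro derives_iffI) (meson derives_K derives_insert derives_weaken)+
qed

lemma derives_Box_boxdot: "G \<turnstile> Box A \<Longrightarrow> G \<turnstile> Box (And A (Box A))"
  by (meson derives_K derives_Box_mono derives_four iGL.ax igl_ax.ipc ipc_ax.AndI)

lemma subst_subst: "subst \<sigma> (subst \<rho> A) = subst (\<lambda>b. subst \<sigma> (\<rho> b)) A"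
  by (induction A) auto

lemma subst_cong: "(\<And>b. b \<in> atoms A \<Longrightarrow> \<sigma> b = \<rho> b) \<Longrightarrow> subst \<sigma> A = subst \<rho> A"
  by (induction A) auto

lemma atoms_subst: "atoms (subst \<sigma> A) = (\<Union>b\<in>atoms A. atoms (\<sigma> b))"
  by (induction A) auto

lemma finite_atoms: "finite (atoms A)"
  by (induction A) auto

lemma derives_subst_cong:
  assumes "{H} \<turnstile> Box H"
    and "\<And>b. b \<in> atoms A \<Longrightarrow> {H} \<turnstile> Iff (\<sigma> b) (\<rho> b)"
  shows "{H} \<turnstile> Iff (subst \<sigma> A) (subst \<rho> A)"
  using assms(2)
proof (induction A)
  case (Box C)
  then have "iGL (Imp H (Iff (subst \<sigma> C) (subst \<rho> C)))"
    by (simp add: derives_impI_iGL)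
  then show ?case
    using derives_Box_mono[OF _ assms(1)] derives_Box_iff by simp
qed (auto intro: derives_iff_refl derives_And_cong derives_Or_cong derives_Imp_cong)

text \<open>Under the hypothesis \<open>X \<and> \<box>X\<close>, which proves its own box, \<open>X\<close> and \<open>\<top>\<close> are
  interchangeable inside \<open>D\<close>; this yields \<open>\<box>X \<rightarrow> (X \<leftrightarrow> \<box>D(X))\<close>, and Loeb's rule removes \<open>\<box>X\<close>.\<close>

lemma box_fixed_point:
  fixes \<sigma> :: "atom \<Rightarrow> fm" and p :: atom and D :: fm
  defines "X \<equiv> Box (subst (\<sigma>(p := Verum)) D)"
  shows "iGL (Iff (Box (subst (\<sigma>(p := X)) D)) X)"
proof -
  define Y where "Y = Box (subst (\<sigma>(p := X)) D)"
  let ?H = "And X (Box X)"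
  have boxed_X_equiv: "iGL (Imp (Box X) (Iff X Y))"
  proof -
    have "{?H} \<turnstile> Box ?H"
      by (rule derives_Box_boxdot[OF derives_conjD2[OF derives_insert]])
    moreover have "{?H} \<turnstile> Iff Verum X"
      by (rule derives_iffI[OF derives_weaken derives.from_iGL[OF iGL_imp_refl]])
        (rule derives_conjD1[OF derives_insert])
    then have "{?H} \<turnstile> Iff ((\<sigma>(p := Verum)) b) ((\<sigma>(p := X)) b)" for b
      by (simp add: derives_iff_refl)
    ultimately have "iGL (Imp ?H (Iff (subst (\<sigma>(p := Verum)) D) (subst (\<sigma>(p := X)) D)))"
      by (rule derives_impI_iGL[OF derives_subst_cong])
    moreover have "{Box X} \<turnstile> Box ?H"
      by (rule derives_Box_boxdot[OF derives_insert])
    ultimately have "{Box X} \<turnstile> Iff X Y"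
      unfolding X_def Y_def by (rule derives_Box_iff[OF derives_Box_mono])
    then show ?thesis
      by (rule derives_impI_iGL)
  qed
  have "{X} \<turnstile> Box X"
    unfolding X_def by (rule derives_four[OF derives_insert])
  then have "{X} \<turnstile> Y"
    by (rule derives_iffD1[OF derives.mp[OF derives.from_iGL[OF boxed_X_equiv]] derives_insert])
  moreover have "iGL (Imp Y X)"
  proof (rule iGL_loeb_rule, rule derives_impI_iGL, rule derives_impI)
    have "insert Y {Box (Imp Y X)} \<turnstile> Box X"
      unfolding Y_def by (rule derives_K[OF derives_weaken[OF derives_insert] derives_four[OF derives_insert]])
    then show "insert Y {Box (Imp Y X)} \<turnstile> X"
      by (rule derives_iffD2[OF derives.mp[OF derives.from_iGL[OF boxed_X_equiv]] derives_insert])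
  qed
  then have "{Y} \<turnstile> X"
    by (rule derives.mp[OF derives.from_iGL derives_insert])
  ultimately show ?thesis
    unfolding Y_def[symmetric] derives_empty_iff[symmetric] by (rule derives_iffI[rotated])
qed

text \<open>The equation of \<open>x\<close> is solved by \<open>\<box>D\<^sub>x(\<top>)\<close> in terms of the other unknowns; substituting
  this into the remaining equations and solving them recursively gives the whole system.\<close>

lemma boxed_fixed_points:
  assumes "finite P"
  shows "\<exists>\<sigma>. (\<forall>p\<in>P. iGL (Iff (subst \<sigma> (Box (D p))) (\<sigma> p))) \<and> (\<forall>b. b \<notin> P \<longrightarrow> \<sigma> b = At b) \<and>
             (\<forall>p\<in>P. atoms (\<sigma> p) \<subseteq> (\<Union>p'\<in>P. atoms (D p')) - P)"
  using assms
proof (induction P arbitrary: D rule: finite_induct)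
  case empty
  show ?case by (intro exI[of _ At]) simp
next
  case (insert x P)
  define G where "G = subst (At(x := Verum)) (Box (D x))"
  define D' where "D' p = subst (At(x := G)) (D p)" for p
  obtain \<sigma>\<^sub>0 where eq0: "\<forall>p\<in>P. iGL (Iff (subst \<sigma>\<^sub>0 (Box (D' p))) (\<sigma>\<^sub>0 p))"
    and id0: "\<forall>b. b \<notin> P \<longrightarrow> \<sigma>\<^sub>0 b = At b"
    and atoms0: "\<forall>p\<in>P. atoms (\<sigma>\<^sub>0 p) \<subseteq> (\<Union>p'\<in>P. atoms (D' p')) - P"
    using insert.IH[of D'] by blast
  define \<sigma> where "\<sigma> b = subst \<sigma>\<^sub>0 ((At(x := G)) b)" for b
  have subst_\<sigma>: "subst \<sigma> A = subst \<sigma>\<^sub>0 (subst (At(x := G)) A)" for A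
    unfolding \<sigma>_def[abs_def] by (rule subst_subst[symmetric])
  have \<sigma>_x: "\<sigma> x = Box (subst (\<sigma>\<^sub>0(x := Verum)) (D x))"
    using id0 insert.hyps(2)
    unfolding \<sigma>_def G_def by (simp add: subst_subst, intro subst_cong) auto
  have \<sigma>_other: "\<sigma> b = \<sigma>\<^sub>0 b" if "b \<noteq> x" for b
    using that by (simp add: \<sigma>_def)
  have "iGL (Iff (subst \<sigma> (Box (D p))) (\<sigma> p))" if "p \<in> insert x P" for p
  proof (cases "p = x")
    case True
    have "\<sigma>\<^sub>0(x := \<sigma> x) = \<sigma>"
      using \<sigma>_other by auto
    then show ?thesis
      using box_fixed_point[of \<sigma>\<^sub>0 x "D x"] True by (simp add: \<sigma>_x)
  next
    case False
    then show ?thesis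
      using that eq0 \<sigma>_other by (simp add: subst_\<sigma> D'_def)
  qed
  moreover have "\<sigma> b = At b" if "b \<notin> insert x P" for b
    using that id0 \<sigma>_other by simp
  moreover have "atoms (\<sigma> p) \<subseteq> (\<Union>p'\<in>insert x P. atoms (D p')) - insert x P"
    if "p \<in> insert x P" for p
  proof -
    have atoms_G: "atoms G \<subseteq> atoms (D x) - {x}"
      by (auto simp: G_def atoms_subst split: if_splits)
    then have "atoms (D' p') \<subseteq> (\<Union>p'\<in>insert x P. atoms (D p')) - {x}" if "p' \<in> P" for p'
      using that by (auto simp: D'_def atoms_subst split: if_splits)
    then have atoms_\<sigma>\<^sub>0: "atoms (\<sigma>\<^sub>0 p') \<subseteq> (\<Union>p'\<in>insert x P. atoms (D p')) - insert x P"
      if "p' \<in> P" for p'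
      using that atoms0 by fastforce
    have "atoms (\<sigma> x) = (\<Union>b\<in>atoms G. atoms (\<sigma>\<^sub>0 b))"
      by (simp add: \<sigma>_def atoms_subst)
    also have "\<dots> \<subseteq> (\<Union>p'\<in>insert x P. atoms (D p')) - insert x P"
      using atoms_G atoms_\<sigma>\<^sub>0 id0 by fastforce
    finally show ?thesis
      using that atoms_\<sigma>\<^sub>0 \<sigma>_other by (cases "p = x") auto
  qed
  ultimately show ?case by blast
qed

lemma boxed_fixed_points_indexed:
  assumes "finite I" and "inj_on q I"
  shows "\<exists>\<sigma>. (\<forall>C\<in>I. iGL (Iff (subst \<sigma> (Box (D C))) (\<sigma> (q C)))) \<and>
             (\<forall>b. b \<notin> q ` I \<longrightarrow> \<sigma> b = At b) \<and>
             (\<forall>C\<in>I. atoms (\<sigma> (q C)) \<subseteq> (\<Union>C'\<in>I. atoms (D C')) - q ` I)"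
  using boxed_fixed_points[of "q ` I" "\<lambda>b. D (inv_into I q b)"] assms by auto

fun top_boxes :: "fm \<Rightarrow> fm set" where
  "top_boxes (At b) = {}"
| "top_boxes Bot = {}"
| "top_boxes (And A B) = top_boxes A \<union> top_boxes B"
| "top_boxes (Or A B) = top_boxes A \<union> top_boxes B"
| "top_boxes (Imp A B) = top_boxes A \<union> top_boxes B"
| "top_boxes (Box C) = {C}"

fun abstract_boxes :: "(fm \<Rightarrow> atom) \<Rightarrow> fm \<Rightarrow> fm" where
  "abstract_boxes q (At b) = At b"
| "abstract_boxes q Bot = Bot"
| "abstract_boxes q (And A B) = And (abstract_boxes q A) (abstract_boxes q B)"
| "abstract_boxes q (Or A B) = Or (abstract_boxes q A) (abstract_boxes q B)"
| "abstract_boxes q (Imp A B) = Imp (abstract_boxes q A) (abstract_boxes q B)"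
| "abstract_boxes q (Box C) = At (q C)"

lemma finite_top_boxes: "finite (top_boxes E)"
  by (induction E) auto

lemma atoms_top_boxes: "C \<in> top_boxes E \<Longrightarrow> atoms C \<subseteq> atoms E"
  by (induction E) auto

lemma atoms_if_not_guarded: "\<not> guarded b E \<Longrightarrow> b \<in> atoms E"
  by (induction E) auto

lemma atoms_abstract_boxes:
  "(\<And>b. b \<in> P \<Longrightarrow> guarded b E) \<Longrightarrow> atoms (abstract_boxes q E) \<subseteq> (atoms E - P) \<union> q ` top_boxes E"
  by (induction E) auto

lemma iGL_subst_abstract_boxes:
  assumes "\<And>C. C \<in> top_boxes E \<Longrightarrow> iGL (Iff (Box (subst \<tau> C)) (\<sigma> (q C)))"
    and "\<And>b. \<not> guarded b E \<Longrightarrow> \<tau> b = \<sigma> b"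
  shows "iGL (Iff (subst \<tau> E) (subst \<sigma> (abstract_boxes q E)))"
  using assms unfolding derives_empty_iff[symmetric]
  by (induction E) (auto intro: derives_iff_refl derives_And_cong derives_Or_cong derives_Imp_cong)

lemma fresh_atom_embedding:
  assumes "finite S"
  obtains q :: "'a::countable \<Rightarrow> atom" where "inj q" and "range q \<inter> S = {}"
proof -
  have "finite (PVar -` S)"
    using assms by (simp add: finite_vimageI inj_on_def)
  then obtain N where "PVar -` S \<subseteq> {..<N}"
    by (auto simp: finite_nat_set_iff_bounded)
  then have "range (\<lambda>x. PVar (N + to_nat x)) \<inter> S = {}"
    by force
  moreover have "inj (\<lambda>x. PVar (N + to_nat x))"
    by (simp add: inj_on_def)
  ultimately show thesis
    using that by blast
qed

instance atom :: countable by countable_datatype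
instance fm :: countable by countable_datatype

lemma guarded_fixed_points:
  assumes "finite P" and guarded: "\<forall>p\<in>P. \<forall>p'\<in>P. guarded p (F p')"
  shows "\<exists>\<tau>. (\<forall>p\<in>P. iGL (Iff (subst \<tau> (F p)) (\<tau> p))) \<and> (\<forall>b. b \<notin> P \<longrightarrow> \<tau> b = At b) \<and>
             (\<forall>p\<in>P. atoms (\<tau> p) \<subseteq> (\<Union>p'\<in>P. atoms (F p')) - P)"
proof -
  define Allowed where "Allowed = (\<Union>p\<in>P. atoms (F p)) - P"
  have "finite (Allowed \<union> P)"
    using assms(1) by (simp add: Allowed_def finite_atoms)
  then obtain q :: "fm \<Rightarrow> atom" where "inj q" and q_fresh: "range q \<inter> (Allowed \<union> P) = {}"
    by (rule fresh_atom_embedding)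
  define I where "I = (\<Union>p\<in>P. top_boxes (F p))"
  have fresh: "b \<notin> q ` I" if "b \<in> Allowed \<union> P" for b
    using that q_fresh by blast
  define B where "B b = (if b \<in> P then abstract_boxes q (F b) else At b)" for b
  have atoms_B: "atoms (B b) \<subseteq> Allowed \<union> q ` I" if "b \<in> Allowed \<union> P" for b
    using that atoms_abstract_boxes[of P "F b" q] guarded by (auto simp: B_def Allowed_def I_def)
  have atoms_I: "atoms C \<subseteq> Allowed \<union> P" if "C \<in> I" for C
    using that atoms_top_boxes by (fastforce simp: Allowed_def I_def)
  have atoms_subst_B: "atoms (subst B C) \<subseteq> Allowed \<union> q ` I" if "C \<in> I" for C
    using atoms_I[OF that] atoms_B by (auto simp: atoms_subst)
  have "finite I"
    using assms(1) by (simp add: I_def finite_top_boxes)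
  moreover have "inj_on q I"
    using \<open>inj q\<close> by (rule inj_on_subset) simp
  ultimately obtain \<sigma> where \<sigma>_eq: "\<forall>C\<in>I. iGL (Iff (subst \<sigma> (Box (subst B C))) (\<sigma> (q C)))"
    and \<sigma>_id: "\<forall>b. b \<notin> q ` I \<longrightarrow> \<sigma> b = At b"
    and \<sigma>_atoms: "\<forall>C\<in>I. atoms (\<sigma> (q C)) \<subseteq> (\<Union>C'\<in>I. atoms (subst B C')) - q ` I"
    using boxed_fixed_points_indexed[of I q "subst B"] by blast
  have atoms_\<sigma>: "atoms (\<sigma> b) \<subseteq> Allowed" if "b \<in> Allowed \<union> q ` I" for b
  proof (cases "b \<in> q ` I")
    case True
    then obtain C where "C \<in> I" and "b = q C"
      by blast
    then show ?thesis
      using \<sigma>_atoms atoms_subst_B by blast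
  qed (use that \<sigma>_id in auto)
  define \<tau> where "\<tau> b = (if b \<in> P then subst \<sigma> (B b) else At b)" for b
  have \<tau>_B: "\<tau> b = subst \<sigma> (B b)" if "b \<in> Allowed \<union> P" for b
    using that fresh \<sigma>_id by (auto simp: \<tau>_def B_def)
  have "iGL (Iff (subst \<tau> (F p)) (\<tau> p))" if "p \<in> P" for p
  proof -
    have "iGL (Iff (subst \<tau> (F p)) (subst \<sigma> (abstract_boxes q (F p))))"
    proof (rule iGL_subst_abstract_boxes)
      fix C assume "C \<in> top_boxes (F p)"
      then have "C \<in> I"
        using that by (auto simp: I_def)
      then have "subst \<tau> C = subst \<sigma> (subst B C)"
        unfolding subst_subst using atoms_I \<tau>_B by (auto intro: subst_cong)
      with \<open>C \<in> I\<close> show "iGL (Iff (Box (subst \<tau> C)) (\<sigma> (q C)))"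
        using \<sigma>_eq by simp
    next
      fix b assume "\<not> guarded b (F p)"
      then have "b \<in> Allowed"
        using that guarded atoms_if_not_guarded by (auto simp: Allowed_def)
      then show "\<tau> b = \<sigma> b"
        using \<tau>_B fresh \<sigma>_id by (auto simp: B_def Allowed_def)
    qed
    then show ?thesis
      using that by (simp add: \<tau>_def B_def)
  qed
  moreover have "atoms (\<tau> p) \<subseteq> Allowed" if "p \<in> P" for p
  proof -
    have "atoms (\<tau> p) = (\<Union>b\<in>atoms (B p). atoms (\<sigma> b))"
      using that by (simp add: \<tau>_B atoms_subst)
    then show ?thesis
      using that atoms_B atoms_\<sigma> by blast
  qed
  ultimately show ?thesis
    unfolding Allowed_def by (intro exI[of _ \<tau>]) (auto simp: \<tau>_def)
qed

theorem mainTheorem15: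
  fixes m :: nat and E :: "nat \<Rightarrow> fm" and a :: "nat \<Rightarrow> atom"
  assumes "inj_on a {..<m}"
    and "\<forall>i<m. \<forall>j<m. guarded (a i) (E j)"
  shows "\<exists>\<tau> :: atom \<Rightarrow> fm.
     (\<forall>i<m. iGL (Iff (subst \<tau> (E i)) (subst \<tau> (At (a i))))) \<and>
     (\<forall>b. b \<notin> a ` {..<m} \<longrightarrow> \<tau> b = At b) \<and>
     (\<forall>i<m. \<forall>c \<in> atoms (\<tau> (a i)). (\<exists>j<m. c \<in> atoms (E j)) \<and> c \<notin> a ` {..<m})"
proof -
  define F where "F p = E (inv_into {..<m} a p)" for p
  have F_a: "F (a i) = E i" if "i < m" for i
    using assms(1) that by (simp add: F_def)
  have "\<forall>p\<in>a ` {..<m}. \<forall>p'\<in>a ` {..<m}. guarded p (F p')"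
    using assms(2) F_a by auto
  then obtain \<tau> where "\<forall>p\<in>a ` {..<m}. iGL (Iff (subst \<tau> (F p)) (\<tau> p))"
    and "\<forall>b. b \<notin> a ` {..<m} \<longrightarrow> \<tau> b = At b"
    and "\<forall>p\<in>a ` {..<m}. atoms (\<tau> p) \<subseteq> (\<Union>p'\<in>a ` {..<m}. atoms (F p')) - a ` {..<m}"
    using guarded_fixed_points[of "a ` {..<m}" F] by blast
  then show ?thesis
    using F_a by (intro exI[of _ \<tau>]) fastforce
qed

end
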